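(* Fix $q\ge2$ and $z\in\mathbb Z$, let $k=\lceil\log_q n\rceil+z$, $n'=n-k-2$ and $\Delta_n=\log_q n-\lceil\log_q n\rceil$. Then $$\lim_{n\to\infty}\frac{2^{n'E_{k,q}}}{\frac{q^n}{n}\cdot q^{\Delta_n-z-2}\,e^{-(q-1)q^{\Delta_n-z-1}}}=1.$$
   Context: $\Sigma_q=\{0,\dots,q-1\}$. A vector in $\Sigma_q^m$ is a $k$-RLL vector if $m<k$ or it has no run of $k$ consecutive zeros; $a_q(m,k)$ is their number, and $E_{k,q}=\lim_{m\to\infty}\frac{\log_2 a_q(m,k)}{m}$. It is known (Jain et al.) that $\lim_{k\to\infty}\frac{(q-1)(\log_2 e)q^{-k-2}}{\log_2 q-E_{k,q}}=1$. *)

theory Defs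
  imports Complex_Main
begin

definition is_RLL :: "nat \<Rightarrow> nat list \<Rightarrow> bool" where
  "is_RLL k xs \<longleftrightarrow> length xs < k \<or>
     \<not> (\<exists>i. i + k \<le> length xs \<and> (\<forall>j<k. xs ! (i + j) = 0))"

definition a_RLL :: "nat \<Rightarrow> nat \<Rightarrow> nat \<Rightarrow> nat" where
  "a_RLL q m k = card {xs :: nat list. length xs = m \<and> set xs \<subseteq> {0..<q} \<and> is_RLL k xs}"

definition E_RLL :: "nat \<Rightarrow> nat \<Rightarrow> real" where
  "E_RLL k q = lim (\<lambda>m. log 2 (real (a_RLL q m k)) / real m)"

end

theory Submission
  imports Defs "HOL-Analysis.Infinite_Products" "HOL-Real_Asymp.Real_Asymp"
begin

text \<open>Cutting off the last nonzero letter and the t < k zeros after it gives the recurrence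
  a(m) = (q - 1) (a(m-1) + ... + a(m-k)) for m \<ge> k. Hence if x \<ge> 1/q solves
  (q - 1) (x + ... + x^k) = 1, then a(m) is (1/x)^m up to a bounded factor and E(k,q) = - log2 x.
  Writing q x = 1 + \<delta> and \<epsilon> = (q - 1) / q^(k+1), the root equation reads \<delta> = \<epsilon> (1 + \<delta>)^(k+1);
  as x stays below (q + 1) / (2 q), \<delta> decays geometrically, so (k + 2) ln (1 + \<delta>) \<rightarrow> 0 and
  ln (1 + \<delta>) / \<epsilon> \<rightarrow> 1. For k = \<lceil>log_q n\<rceil> + z the ratio in question equals
  exp (c (1 - ln (1 + \<delta>) / \<epsilon>) + (k + 2) ln (1 + \<delta>)) with c = (q - 1) q^(\<Delta> - z - 1) bounded,
  so it tends to 1.\<close>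

definition has_zero_run :: "nat \<Rightarrow> nat list \<Rightarrow> bool" where
  "has_zero_run k xs \<longleftrightarrow> (\<exists>i. i + k \<le> length xs \<and> (\<forall>j<k. xs ! (i + j) = 0))"

lemma is_RLL_iff_not_has_zero_run: "is_RLL k xs \<longleftrightarrow> \<not> has_zero_run k xs"
  unfolding is_RLL_def has_zero_run_def by auto

lemma has_zero_run_replicate: "k \<le> m \<Longrightarrow> has_zero_run k (replicate m 0)"
  unfolding has_zero_run_def by (intro exI[of _ 0]) auto

lemma has_zero_run_trailing_zeros:
  assumes "k \<le> t"
  shows "has_zero_run k (ys @ c # replicate t 0)"
  unfolding has_zero_run_def using assms
  by (intro exI[of _ "length ys + 1 + (t - k)"]) (auto simp: nth_append)

lemma has_zero_run_append_nonzero_zeros: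
  assumes "c \<noteq> 0" "t < k"
  shows "has_zero_run k (ys @ c # replicate t 0) \<longleftrightarrow> has_zero_run k ys"
proof
  assume "has_zero_run k (ys @ c # replicate t 0)"
  then obtain i where i: "i + k \<le> length ys + 1 + t"
    and zero: "\<forall>j<k. (ys @ c # replicate t 0) ! (i + j) = 0"
    unfolding has_zero_run_def by auto
  have "i + k \<le> length ys"
  proof (rule ccontr)
    assume "\<not> i + k \<le> length ys"
    then have "i \<le> length ys" "length ys - i < k" using i assms(2) by arith+
    then show False
      using zero[rule_format, of "length ys - i"] assms(1) by simp
  qed
  then show "has_zero_run k ys"
    using zero unfolding has_zero_run_def by (auto simp: nth_append)
next
  assume "has_zero_run k ys"
  then obtain i where "i + k \<le> length ys" "\<forall>j<k. ys ! (i + j) = 0"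
    unfolding has_zero_run_def by auto
  then show "has_zero_run k (ys @ c # replicate t 0)"
    unfolding has_zero_run_def by (intro exI[of _ i]) (auto simp: nth_append)
qed

lemma zeros_or_last_nonzero:
  "xs = replicate (length xs) 0 \<or> (\<exists>ys c t. c \<noteq> 0 \<and> xs = ys @ c # replicate t 0)"
proof (induction xs rule: rev_induct)
  case (snoc x xs)
  show ?case
  proof (cases "x = 0")
    case False
    then show ?thesis by (intro disjI2 exI[of _ xs] exI[of _ x] exI[of _ 0]) auto
  next
    case True
    with snoc.IH show ?thesis
      by (metis replicate_Suc replicate_append_same length_append_singleton append_Cons append_assoc)
  qed
qed simp

lemma last_nonzero_unique:
  assumes "c \<noteq> 0" "c' \<noteq> 0" "ys @ c # replicate t 0 = ys' @ c' # replicate t' 0"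
  shows "ys = ys' \<and> c = c' \<and> t = t'"
proof -
  have rev_eq: "replicate t 0 @ c # rev ys = replicate t' 0 @ c' # rev ys'"
    using arg_cong[OF assms(3), of rev] by simp
  have leading_zeros: "takeWhile (\<lambda>x. x = 0) (replicate n 0 @ d # zs) = replicate n 0"
    if "d \<noteq> 0" for n d zs
    using that by (induct n) auto
  have "t = t'"
    using rev_eq leading_zeros[OF assms(1)] leading_zeros[OF assms(2)] by (metis length_replicate)
  then show ?thesis using rev_eq by simp
qed

definition RLL_vectors :: "nat \<Rightarrow> nat \<Rightarrow> nat \<Rightarrow> nat list set" where
  "RLL_vectors q k m = {xs. length xs = m \<and> set xs \<subseteq> {0..<q} \<and> is_RLL k xs}"

lemma a_RLL_eq_card: "a_RLL q m k = card (RLL_vectors q k m)"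
  unfolding a_RLL_def RLL_vectors_def by simp

lemma finite_RLL_vectors: "finite (RLL_vectors q k m)"
  by (rule finite_subset[OF _ finite_lists_length_eq[of "{0..<q}" m]])
    (auto simp: RLL_vectors_def)

lemma a_RLL_short:
  assumes "m < k"
  shows "a_RLL q m k = q ^ m"
proof -
  have "RLL_vectors q k m = {xs. set xs \<subseteq> {0..<q} \<and> length xs = m}"
    using assms by (auto simp: RLL_vectors_def is_RLL_def)
  then show ?thesis
    using card_lists_length_eq[of "{0..<q}" m] by (simp add: a_RLL_eq_card)
qed

lemma RLL_vectors_split:
  assumes "1 \<le> k" "k \<le> m"
  shows "RLL_vectors q k m =
    (\<Union>t<k. (\<lambda>(ys, c). ys @ c # replicate t 0) ` (RLL_vectors q k (m - 1 - t) \<times> {1..<q}))"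
    (is "_ = ?R")
proof
  show "RLL_vectors q k m \<subseteq> ?R"
  proof
    fix xs assume xs: "xs \<in> RLL_vectors q k m"
    then have no_run: "\<not> has_zero_run k xs" and len: "length xs = m"
      and letters: "set xs \<subseteq> {0..<q}"
      unfolding RLL_vectors_def is_RLL_iff_not_has_zero_run by auto
    have "xs \<noteq> replicate (length xs) 0"
      using no_run has_zero_run_replicate[of k m] len assms by metis
    then obtain ys c t where c: "c \<noteq> 0" and xs_eq: "xs = ys @ c # replicate t 0"
      using zeros_or_last_nonzero by blast
    have t: "t < k"
      using has_zero_run_trailing_zeros[of k t ys c] no_run xs_eq by (meson not_less)
    have "ys \<in> RLL_vectors q k (m - 1 - t)"
      using no_run xs_eq len letters has_zero_run_append_nonzero_zeros[OF c t, of ys]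
      unfolding RLL_vectors_def is_RLL_iff_not_has_zero_run by auto
    moreover have "c \<in> {1..<q}" using letters xs_eq c by auto
    ultimately show "xs \<in> ?R" using t xs_eq by force
  qed
next
  show "?R \<subseteq> RLL_vectors q k m"
  proof
    fix xs assume "xs \<in> ?R"
    then obtain t ys c where t: "t < k" and ys: "ys \<in> RLL_vectors q k (m - 1 - t)"
      and c: "c \<in> {1..<q}" and xs_eq: "xs = ys @ c # replicate t 0" by auto
    have "c \<noteq> 0" using c by auto
    then show "xs \<in> RLL_vectors q k m"
      using ys c t assms has_zero_run_append_nonzero_zeros[of c t k ys] xs_eq
      unfolding RLL_vectors_def is_RLL_iff_not_has_zero_run by auto
  qed
qed

lemma a_RLL_recurrence:
  assumes "1 \<le> k" "k \<le> m"
  shows "a_RLL q m k = (q - 1) * (\<Sum>t<k. a_RLL q (m - 1 - t) k)"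
proof -
  let ?append_tail = "\<lambda>t (ys, c). ys @ c # replicate t 0"
  let ?piece = "\<lambda>t. ?append_tail t ` (RLL_vectors q k (m - 1 - t) \<times> {1..<q})"
  have inj: "inj_on (?append_tail t) (RLL_vectors q k (m - 1 - t) \<times> {1..<q})" for t
    unfolding inj_on_def by (auto dest!: last_nonzero_unique[rotated 2])
  have disjoint: "?piece i \<inter> ?piece j = {}" if "i \<noteq> j" for i j
    using that by (auto dest!: last_nonzero_unique[rotated 2])
  have "a_RLL q m k = (\<Sum>t<k. card (?piece t))"
    unfolding a_RLL_eq_card RLL_vectors_split[OF assms]
    by (rule card_UN_disjoint) (use finite_RLL_vectors disjoint in auto)
  also have "\<dots> = (\<Sum>t<k. a_RLL q (m - 1 - t) k * (q - 1))"
    using card_image[OF inj] by (simp add: card_cartesian_product a_RLL_eq_card)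
  finally show ?thesis by (simp add: sum_distrib_left mult.commute)
qed

definition RLL_char :: "nat \<Rightarrow> nat \<Rightarrow> real \<Rightarrow> real" where
  "RLL_char q k x = (real q - 1) * (\<Sum>t<k. x ^ (t + 1))"

lemma RLL_char_geometric: "(1 - x) * RLL_char q k x = (real q - 1) * x * (1 - x ^ k)"
proof -
  have "(\<Sum>t<k. x ^ (t + 1)) = x * (\<Sum>t<k. x ^ t)"
    by (simp add: sum_distrib_left)
  then show ?thesis
    unfolding RLL_char_def one_diff_power_eq[of x k] by (simp add: algebra_simps)
qed

text \<open>(1/x)^m solves the recurrence of a_RLL, and the initial values q^m (m < k) lie between
  (1/x)^m and (q x)^k (1/x)^m; induction propagates both bounds.\<close>

lemma a_RLL_root_bounds:
  assumes q: "q > 0" and k: "k \<ge> 1" and x: "x \<ge> 1 / real q" and root: "RLL_char q k x = 1"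
  shows "(1 / x) ^ m \<le> real (a_RLL q m k) \<and> real (a_RLL q m k) \<le> (real q * x) ^ k * (1 / x) ^ m"
proof (induction m rule: less_induct)
  case (less m)
  have x_pos: "x > 0" using x q by (smt (verit) divide_pos_pos of_nat_0_less_iff)
  have qx: "real q * x \<ge> 1" using x q by (simp add: field_simps)
  show ?case
  proof (cases "m < k")
    case True
    have "(1 / x) ^ m \<le> real q ^ m"
      using qx x_pos by (intro power_mono) (auto simp: field_simps)
    moreover have "real q ^ m = (real q * x) ^ m * (1 / x) ^ m"
      using x_pos by (simp add: power_mult_distrib[symmetric])
    moreover have "(real q * x) ^ m \<le> (real q * x) ^ k"
      using qx True by (intro power_increasing) auto
    ultimately show ?thesis
      using a_RLL_short[OF True, of q] x_pos by (simp add: mult_right_mono)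
  next
    case False
    then have km: "k \<le> m" by simp
    have rec: "real (a_RLL q m k) = (real q - 1) * (\<Sum>t<k. real (a_RLL q (m - 1 - t) k))"
      using a_RLL_recurrence[OF k km, of q] q by (simp add: of_nat_diff)
    have shift: "(1 / x) ^ (m - 1 - t) = (1 / x) ^ m * x ^ (t + 1)" if "t < k" for t
    proof -
      have "(1 / x) ^ m = (1 / x) ^ (m - 1 - t) * (1 / x) ^ (t + 1)"
        by (subst power_add[symmetric]) (use that km in simp)
      then show ?thesis using x_pos by (simp add: power_one_over field_simps)
    qed
    have "(\<Sum>t<k. (1 / x) ^ (m - 1 - t)) = (1 / x) ^ m * (\<Sum>t<k. x ^ (t + 1))"
      unfolding sum_distrib_left by (rule sum.cong[OF refl]) (metis lessThan_iff shift)
    then have solution: "(real q - 1) * (\<Sum>t<k. (1 / x) ^ (m - 1 - t)) = (1 / x) ^ m"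
      using root unfolding RLL_char_def by (metis mult.left_commute mult.right_neutral)
    have q1: "real q - 1 \<ge> 0" using q by simp
    have "(1 / x) ^ m \<le> (real q - 1) * (\<Sum>t<k. real (a_RLL q (m - 1 - t) k))"
      unfolding solution[symmetric] using less km k
      by (intro mult_left_mono[OF sum_mono q1]) auto
    moreover have "(real q - 1) * (\<Sum>t<k. real (a_RLL q (m - 1 - t) k))
        \<le> (real q - 1) * (\<Sum>t<k. (real q * x) ^ k * (1 / x) ^ (m - 1 - t))"
      using less km k by (intro mult_left_mono[OF sum_mono q1]) auto
    moreover have "\<dots> = (real q * x) ^ k * (1 / x) ^ m"
      unfolding solution[symmetric] by (simp add: sum_distrib_left algebra_simps)
    ultimately show ?thesis using rec by simp
  qed
qed

lemma E_RLL_eq_neg_log_root: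
  assumes q: "q > 0" and k: "k \<ge> 1" and x: "x \<ge> 1 / real q" and root: "RLL_char q k x = 1"
  shows "E_RLL k q = - log 2 x"
proof -
  have x_pos: "x > 0" using x q by (smt (verit) divide_pos_pos of_nat_0_less_iff)
  define C where "C = (real q * x) ^ k"
  have C_pos: "C > 0" unfolding C_def using x_pos q by simp
  note bounds = a_RLL_root_bounds[OF q k x root]
  let ?f = "\<lambda>m. log 2 (real (a_RLL q m k)) / real m"
  have lower: "log 2 (1 / x) \<le> ?f m" if "m \<ge> 1" for m
  proof -
    have "real m * log 2 (1 / x) = log 2 ((1 / x) ^ m)"
      using x_pos by (simp add: log_nat_power)
    also have "\<dots> \<le> log 2 (real (a_RLL q m k))"
      using bounds[of m] x_pos by (intro log_mono) auto
    finally show ?thesis using that by (simp add: field_simps)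
  qed
  have upper: "?f m \<le> log 2 C / real m + log 2 (1 / x)" if "m \<ge> 1" for m
  proof -
    have "0 < (1 / x) ^ m" using x_pos by simp
    then have "log 2 (real (a_RLL q m k)) \<le> log 2 (C * (1 / x) ^ m)"
      using bounds[of m] unfolding C_def by (intro log_mono) auto
    also have "\<dots> = log 2 C + real m * log 2 (1 / x)"
      using x_pos C_pos by (simp add: log_mult log_nat_power)
    finally show ?thesis using that by (simp add: field_simps)
  qed
  have "?f \<longlonglongrightarrow> log 2 (1 / x)"
  proof (rule tendsto_sandwich[OF _ _ tendsto_const])
    show "\<forall>\<^sub>F m in sequentially. log 2 (1 / x) \<le> ?f m"
      using lower eventually_sequentially by blast
    show "\<forall>\<^sub>F m in sequentially. ?f m \<le> log 2 C / real m + log 2 (1 / x)"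
      using upper eventually_sequentially by blast
    show "(\<lambda>m. log 2 C / real m + log 2 (1 / x)) \<longlonglongrightarrow> log 2 (1 / x)"
      using tendsto_add[OF lim_const_over_n[of "log 2 C"] tendsto_const] by simp
  qed
  then have "E_RLL k q = log 2 (1 / x)" unfolding E_RLL_def by (rule limI)
  then show ?thesis using x_pos by (simp add: log_divide)
qed

definition RLL_root_bound :: "nat \<Rightarrow> real" where
  "RLL_root_bound q = (real q + 1) / (2 * real q)"

lemma RLL_root_bound_bounds:
  assumes "q \<ge> 2"
  shows "0 < RLL_root_bound q" "1 / real q < RLL_root_bound q" "RLL_root_bound q < 1"
  using assms unfolding RLL_root_bound_def by (auto simp: field_simps)

lemma RLL_root_exists:
  assumes q: "q \<ge> 2" and small: "RLL_root_bound q ^ k \<le> 1 / 2"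
  shows "\<exists>x. 1 / real q \<le> x \<and> x \<le> RLL_root_bound q \<and> RLL_char q k x = 1"
proof (rule IVT')
  define b where "b = RLL_root_bound q"
  have qr: "real q \<ge> 2" using q by simp
  have "(1 - 1 / real q) * RLL_char q k (1 / real q) = (real q - 1) * (1 / real q) * (1 - (1 / real q) ^ k)"
    by (rule RLL_char_geometric)
  also have "\<dots> \<le> (1 - 1 / real q) * 1"
    using qr by (simp add: field_simps)
  finally show "RLL_char q k (1 / real q) \<le> 1"
    using qr by (subst (asm) mult_le_cancel_left_pos) auto
  have b: "0 < b" "1 / real q < b" "b < 1" using RLL_root_bound_bounds[OF q] unfolding b_def by auto
  have "(1 - b) * 1 = (real q - 1) * (1 / (2 * real q))"
    using qr unfolding b_def RLL_root_bound_def by (simp add: field_simps)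
  also have "\<dots> \<le> (real q - 1) * (b * (1 / 2))"
    using qr unfolding b_def RLL_root_bound_def by (intro mult_left_mono) (auto simp: field_simps)
  also have "\<dots> \<le> (real q - 1) * (b * (1 - b ^ k))"
    using qr b small unfolding b_def by (intro mult_left_mono) auto
  also have "\<dots> = (1 - b) * RLL_char q k b"
    by (simp add: RLL_char_geometric mult.assoc)
  finally show "1 \<le> RLL_char q k (RLL_root_bound q)"
    using b unfolding b_def by (subst (asm) mult_le_cancel_left_pos) auto
  show "1 / real q \<le> RLL_root_bound q" using b unfolding b_def by simp
  show "continuous_on {1 / real q..RLL_root_bound q} (RLL_char q k)"
    unfolding RLL_char_def by (intro continuous_intros)
qed

text \<open>The root is only meaningful once it exists, i.e. for large k (see the next lemma).\<close>

definition RLL_root :: "nat \<Rightarrow> nat \<Rightarrow> real" where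
  "RLL_root q k = (SOME x. 1 / real q \<le> x \<and> x \<le> RLL_root_bound q \<and> RLL_char q k x = 1)"

lemma eventually_RLL_root:
  assumes q: "q \<ge> 2"
  shows "\<forall>\<^sub>F k in sequentially. 1 \<le> k \<and> 1 / real q \<le> RLL_root q k \<and>
    RLL_root q k \<le> RLL_root_bound q \<and> RLL_char q k (RLL_root q k) = 1"
proof -
  have "(\<lambda>k. RLL_root_bound q ^ k) \<longlonglongrightarrow> 0"
    using RLL_root_bound_bounds[OF q] by (intro LIMSEQ_realpow_zero) auto
  then have "\<forall>\<^sub>F k in sequentially. RLL_root_bound q ^ k \<le> 1 / 2"
    by (rule eventually_mono[OF order_tendstoD(2)[of _ 0 _ "1 / 2"]]) auto
  then show ?thesis
    using eventually_ge_at_top[of 1]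
  proof eventually_elim
    case (elim k)
    then show ?case
      using someI_ex[OF RLL_root_exists[OF q elim(1)]] unfolding RLL_root_def by blast
  qed
qed

lemma eventually_E_RLL_eq_neg_log_RLL_root:
  assumes q: "q \<ge> 2"
  shows "\<forall>\<^sub>F k in sequentially. 1 \<le> k \<and> 0 < RLL_root q k \<and> E_RLL k q = - log 2 (RLL_root q k)"
  using eventually_RLL_root[OF q]
proof eventually_elim
  case (elim k)
  moreover have "0 < 1 / real q" using q by simp
  ultimately have "0 < RLL_root q k" by linarith
  then show ?case using E_RLL_eq_neg_log_root[of q k "RLL_root q k"] elim q by auto
qed

definition RLL_root_excess :: "nat \<Rightarrow> nat \<Rightarrow> real" where
  "RLL_root_excess q k = real q * RLL_root q k - 1"

lemma eventually_RLL_root_excess: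
  assumes q: "q \<ge> 2"
  shows "\<forall>\<^sub>F k in sequentially. 0 < RLL_root_excess q k \<and>
    RLL_root_excess q k \<le> (real q - 1) * RLL_root_bound q ^ (k + 1) \<and>
    RLL_root_excess q k = (real q - 1) / real q ^ (k + 1) * (1 + RLL_root_excess q k) ^ (k + 1)"
  using eventually_RLL_root[OF q]
proof eventually_elim
  case (elim k)
  define x where "x = RLL_root q k"
  have qr: "real q \<ge> 2" using q by simp
  have x: "1 / real q \<le> x" "x \<le> RLL_root_bound q" "RLL_char q k x = 1"
    using elim unfolding x_def by auto
  have x_pos: "x > 0" using x(1) qr by (smt (verit) divide_pos_pos)
  have "1 - x = (real q - 1) * x * (1 - x ^ k)"
    using RLL_char_geometric[of x q k] x(3) by simp
  then have excess: "RLL_root_excess q k = (real q - 1) * x ^ (k + 1)"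
    unfolding RLL_root_excess_def x_def[symmetric] by (simp add: algebra_simps)
  have "0 < RLL_root_excess q k"
    unfolding excess using qr x_pos by simp
  moreover have "RLL_root_excess q k \<le> (real q - 1) * RLL_root_bound q ^ (k + 1)"
    unfolding excess using qr x_pos x(2) by (intro mult_left_mono power_mono) auto
  moreover have "(1 + RLL_root_excess q k) ^ (k + 1) = real q ^ (k + 1) * x ^ (k + 1)"
    unfolding RLL_root_excess_def x_def[symmetric] by (simp add: power_mult_distrib)
  then have "RLL_root_excess q k = (real q - 1) / real q ^ (k + 1) * (1 + RLL_root_excess q k) ^ (k + 1)"
    unfolding excess using qr by simp
  ultimately show ?case by blast
qed

lemma tendsto_linear_times_power_0:
  fixes b :: real
  assumes "0 < b" "b < 1"
  shows "(\<lambda>k. (real k + 2) * b ^ (k + 1)) \<longlonglongrightarrow> 0"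
proof -
  have "(\<lambda>k. real k * b ^ k + b ^ k) \<longlonglongrightarrow> 0 + 0"
    using assms by (intro tendsto_add powser_times_n_limit_0 LIMSEQ_realpow_zero) auto
  then have "(\<lambda>k. real (Suc k) * b ^ Suc k + b ^ Suc k) \<longlonglongrightarrow> 0"
    using LIMSEQ_Suc by fastforce
  then show ?thesis by (simp add: algebra_simps)
qed

lemma RLL_root_excess_weighted_tendsto_0:
  assumes q: "q \<ge> 2"
  shows "(\<lambda>k. (real k + 2) * RLL_root_excess q k) \<longlonglongrightarrow> 0"
proof (rule tendsto_0_le[where K = "real q - 1"])
  show "(\<lambda>k. (real k + 2) * RLL_root_bound q ^ (k + 1)) \<longlonglongrightarrow> 0"
    using RLL_root_bound_bounds[OF q] by (intro tendsto_linear_times_power_0) auto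
  show "\<forall>\<^sub>F k in sequentially. norm ((real k + 2) * RLL_root_excess q k)
      \<le> norm ((real k + 2) * RLL_root_bound q ^ (k + 1)) * (real q - 1)"
    using eventually_RLL_root_excess[OF q]
  proof eventually_elim
    case (elim k)
    then have "(real k + 2) * RLL_root_excess q k
        \<le> (real k + 2) * RLL_root_bound q ^ (k + 1) * (real q - 1)"
      by (simp add: mult_left_mono mult.commute mult.left_commute)
    then show ?case
      using elim RLL_root_bound_bounds(1)[OF q] by (simp add: abs_mult)
  qed
qed

lemma ln_RLL_root_excess_weighted_tendsto_0:
  assumes q: "q \<ge> 2"
  shows "(\<lambda>k. (real k + 2) * ln (1 + RLL_root_excess q k)) \<longlonglongrightarrow> 0"
proof (rule tendsto_0_le[OF RLL_root_excess_weighted_tendsto_0[OF q], where K = 1])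
  show "\<forall>\<^sub>F k in sequentially. norm ((real k + 2) * ln (1 + RLL_root_excess q k))
      \<le> norm ((real k + 2) * RLL_root_excess q k) * 1"
    using eventually_RLL_root_excess[OF q]
    by eventually_elim (auto simp: abs_mult intro!: mult_left_mono ln_add_one_self_le_self)
qed

lemma RLL_root_excess_power_tendsto_1:
  assumes q: "q \<ge> 2"
  shows "(\<lambda>k. (1 + RLL_root_excess q k) ^ (k + 1)) \<longlonglongrightarrow> 1"
proof -
  let ?\<delta> = "RLL_root_excess q"
  note excess = eventually_RLL_root_excess[OF q]
  have "(\<lambda>k. (real k + 1) * ln (1 + ?\<delta> k)) \<longlonglongrightarrow> 0"
    by (rule tendsto_0_le[OF ln_RLL_root_excess_weighted_tendsto_0[OF q], where K = 1])
      (use excess in \<open>eventually_elim, auto simp: abs_mult intro!: mult_right_mono\<close>)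
  then have "(\<lambda>k. exp ((real k + 1) * ln (1 + ?\<delta> k))) \<longlonglongrightarrow> exp 0"
    by (rule tendsto_exp)
  moreover have "\<forall>\<^sub>F k in sequentially. exp ((real k + 1) * ln (1 + ?\<delta> k)) = (1 + ?\<delta> k) ^ (k + 1)"
    using excess
  proof eventually_elim
    case (elim k)
    then have "1 + ?\<delta> k > 0" by simp
    then show ?case using powr_realpow[of "1 + ?\<delta> k" "k + 1"] by (simp add: powr_def ac_simps)
  qed
  ultimately show ?thesis by (simp add: tendsto_cong)
qed

lemma ln_RLL_root_excess_ratio_tendsto_1:
  assumes q: "q \<ge> 2"
  shows "(\<lambda>k. ln (1 + RLL_root_excess q k) / ((real q - 1) / real q ^ (k + 1))) \<longlonglongrightarrow> 1"
proof -
  let ?\<delta> = "RLL_root_excess q"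
  note excess = eventually_RLL_root_excess[OF q]
  have "?\<delta> \<longlonglongrightarrow> 0"
    by (rule tendsto_0_le[OF RLL_root_excess_weighted_tendsto_0[OF q], where K = 1])
      (use excess in \<open>eventually_elim, auto\<close>)
  then have "filterlim ?\<delta> (at 0) sequentially"
    by (rule filterlim_atI) (use excess in \<open>eventually_elim, auto\<close>)
  then have ln_ratio: "(\<lambda>k. ln (1 + ?\<delta> k) / ?\<delta> k) \<longlonglongrightarrow> 1"
    by (rule filterlim_compose[OF lim_ln_1_plus_x_over_x_at_0])
  have "(\<lambda>k. ln (1 + ?\<delta> k) / ?\<delta> k * (1 + ?\<delta> k) ^ (k + 1)) \<longlonglongrightarrow> 1 * 1"
    by (intro tendsto_mult ln_ratio RLL_root_excess_power_tendsto_1[OF q])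
  moreover have "\<forall>\<^sub>F k in sequentially. ln (1 + ?\<delta> k) / ?\<delta> k * (1 + ?\<delta> k) ^ (k + 1)
      = ln (1 + ?\<delta> k) / ((real q - 1) / real q ^ (k + 1))"
    using excess
  proof eventually_elim
    case (elim k)
    then have "(1 + ?\<delta> k) ^ (k + 1) = ?\<delta> k / ((real q - 1) / real q ^ (k + 1))"
      using q by (simp add: field_simps)
    then show ?case using elim by simp
  qed
  ultimately show ?thesis by (simp add: tendsto_cong)
qed

lemma filterlim_nat_ceiling_log_at_top:
  fixes b :: real and z :: int
  assumes "b > 1"
  shows "filterlim (\<lambda>n::nat. nat (\<lceil>log b (real n)\<rceil> + z)) sequentially sequentially"
proof -
  have "filterlim (\<lambda>n::nat. log b (real n) + real_of_int z) at_top sequentially"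
    using assms by real_asymp
  then show ?thesis
    unfolding filterlim_sequentially_iff_filterlim_real
    by (rule filterlim_at_top_mono) (auto intro!: always_eventually, linarith)
qed

text \<open>With \<epsilon> = (q - 1) / q^(k+1) one has c = n \<epsilon>, so the logarithm of the ratio,
  c - (n - k - 2) ln (q x), regroups as below.\<close>

lemma RLL_ratio_eq_exp:
  fixes q x :: real and n k :: nat
  assumes q: "q > 1" and n: "n > 0" and x: "x > 0"
  defines "c \<equiv> (q - 1) * q powr (log q (real n) - real k - 1)"
  shows "2 powr ((real n - real k - 2) * - log 2 x) /
      (q ^ n / real n * q powr (log q (real n) - real k - 2) * exp (- c))
    = exp (c * (1 - ln (q * x) / ((q - 1) / q ^ (k + 1))) + (real k + 2) * ln (q * x))"
proof -
  define \<epsilon> where "\<epsilon> = (q - 1) / q ^ (k + 1)"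
  define n' where "n' = real n - real k - 2"
  have \<epsilon>_pos: "\<epsilon> > 0" unfolding \<epsilon>_def using q by simp
  have shift: "q powr (log q (real n) - real j) = real n / q ^ j" for j
    using q n by (simp add: powr_diff powr_realpow)
  have c_eq: "c = real n * \<epsilon>"
    using shift[of "k + 1"] unfolding c_def \<epsilon>_def by (simp add: diff_diff_add ac_simps)
  have "q ^ n / real n * q powr (log q (real n) - real k - 2) = q ^ n / q ^ (k + 2)"
    using shift[of "k + 2"] n by (simp add: diff_diff_add ac_simps)
  also have "\<dots> = q powr n'"
  proof -
    have "n' = real n - real (k + 2)" unfolding n'_def by simp
    then show ?thesis using q by (simp only: powr_diff powr_realpow)
  qed
  also have "\<dots> = exp (n' * ln q)"
    using q by (simp add: powr_def)
  finally have denominator: "q ^ n / real n * q powr (log q (real n) - real k - 2) * exp (- c)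
      = exp (n' * ln q - c)"
    by (simp add: exp_diff exp_minus field_simps)
  have numerator: "2 powr (n' * - log 2 x) = exp (- n' * ln x)"
    by (simp add: powr_def log_def)
  have "- n' * ln x - (n' * ln q - c) = c * (1 - ln (q * x) / \<epsilon>) + (real k + 2) * ln (q * x)"
    unfolding n'_def using q x \<epsilon>_pos c_eq by (simp add: ln_mult field_simps)
  then show ?thesis
    unfolding n'_def[symmetric] \<epsilon>_def[symmetric] numerator denominator
    by (simp flip: exp_diff)
qed

lemma RLL_ratio_ceiling_log_eq_exp:
  fixes q :: nat and z :: int
  assumes q: "q \<ge> 2" and n: "n > 0" and k: "nat (\<lceil>log (real q) (real n)\<rceil> + z) = k" "k \<ge> 1"
    and x: "x > 0" and E: "E_RLL k q = - log 2 x"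
  shows "(let K = \<lceil>log (real q) (real n)\<rceil> + z;
          n' = real n - real_of_int K - 2;
          \<Delta> = log (real q) (real n) - real_of_int \<lceil>log (real q) (real n)\<rceil>
      in 2 powr (n' * E_RLL (nat K) q) /
         (real q ^ n / real n * real q powr (\<Delta> - real_of_int z - 2)
            * exp (- (real q - 1) * real q powr (\<Delta> - real_of_int z - 1))))
    = exp ((real q - 1) * real q powr
             (log (real q) (real n) - real_of_int \<lceil>log (real q) (real n)\<rceil> - real_of_int z - 1)
           * (1 - ln (real q * x) / ((real q - 1) / real q ^ (k + 1))) + (real k + 2) * ln (real q * x))"
proof -
  define L where "L = log (real q) (real n)"
  have K: "real_of_int (\<lceil>L\<rceil> + z) = real k"
    using k unfolding L_def by (cases "0 \<le> \<lceil>L\<rceil> + z") auto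
  have exponent: "L - real_of_int \<lceil>L\<rceil> - real_of_int z - j = L - real k - j" for j
    using K by simp
  have "real q > 1" using q by simp
  from RLL_ratio_eq_exp[OF this n x, of k, folded L_def] show ?thesis
    unfolding L_def[symmetric] Let_def k(1)[folded L_def] K exponent E by (simp only: mult_minus_left)
qed

lemma tendsto_exp_bounded_mult_null:
  fixes c u v :: "'a \<Rightarrow> real"
  assumes "(u \<longlongrightarrow> 0) F" "(v \<longlongrightarrow> 0) F" "\<And>x. \<bar>c x\<bar> \<le> M"
  shows "((\<lambda>x. exp (c x * u x + v x)) \<longlongrightarrow> 1) F"
proof -
  have "((\<lambda>x. c x * u x) \<longlongrightarrow> 0) F"
  proof (rule tendsto_0_le[OF assms(1), where K = M])
    show "\<forall>\<^sub>F x in F. norm (c x * u x) \<le> norm (u x) * M"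
    proof (intro always_eventually allI)
      fix x
      show "norm (c x * u x) \<le> norm (u x) * M"
        using mult_right_mono[OF assms(3)[of x] abs_ge_zero[of "u x"]] by (simp add: abs_mult mult.commute)
    qed
  qed
  then show ?thesis using tendsto_exp[OF tendsto_add[OF _ assms(2)]] by fastforce
qed

theorem lemma5:
  fixes q :: nat and z :: int
  assumes "q \<ge> 2"
  shows "((\<lambda>n::nat.
      let k = \<lceil>log (real q) (real n)\<rceil> + z;
          n' = real n - real_of_int k - 2;
          \<Delta> = log (real q) (real n) - real_of_int \<lceil>log (real q) (real n)\<rceil>
      in 2 powr (n' * E_RLL (nat k) q) /
         (real q ^ n / real n * real q powr (\<Delta> - real_of_int z - 2)
            * exp (- (real q - 1) * real q powr (\<Delta> - real_of_int z - 1))))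
    \<longlongrightarrow> 1) sequentially"
proof -
  have q: "real q > 1" using assms by simp
  define k where "k n = nat (\<lceil>log (real q) (real n)\<rceil> + z)" for n :: nat
  define c where "c n = (real q - 1) * real q powr
    (log (real q) (real n) - real_of_int \<lceil>log (real q) (real n)\<rceil> - real_of_int z - 1)" for n :: nat
  define U where "U j = 1 - ln (real q * RLL_root q j) / ((real q - 1) / real q ^ (j + 1))" for j
  define V where "V j = (real j + 2) * ln (real q * RLL_root q j)" for j :: nat
  have k: "filterlim k sequentially sequentially"
    unfolding k_def using q by (rule filterlim_nat_ceiling_log_at_top)
  have "U \<longlonglongrightarrow> 0"
    using tendsto_diff[OF tendsto_const ln_RLL_root_excess_ratio_tendsto_1[OF assms], of 1]
    unfolding U_def RLL_root_excess_def by simp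
  moreover have "V \<longlonglongrightarrow> 0"
    using ln_RLL_root_excess_weighted_tendsto_0[OF assms] unfolding V_def RLL_root_excess_def by simp
  moreover have "\<bar>c n\<bar> \<le> (real q - 1) * real q powr (- real_of_int z - 1)" for n
    unfolding c_def using q by (auto simp: abs_mult intro!: mult_left_mono powr_mono le_of_int_ceiling)
  ultimately have "(\<lambda>n. exp (c n * U (k n) + V (k n))) \<longlonglongrightarrow> 1"
    by (intro tendsto_exp_bounded_mult_null filterlim_compose[OF _ k])
  moreover have "\<forall>\<^sub>F n in sequentially. 1 \<le> n \<and>
      1 \<le> k n \<and> 0 < RLL_root q (k n) \<and> E_RLL (k n) q = - log 2 (RLL_root q (k n))"
    using eventually_ge_at_top[of 1]
      eventually_compose_filterlim[OF eventually_E_RLL_eq_neg_log_RLL_root[OF assms] k]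
    by eventually_elim simp
  ultimately show ?thesis
    by (rule Lim_transform_eventually[OF _ eventually_mono], unfold c_def U_def V_def k_def)
      (rule sym, rule RLL_ratio_ceiling_log_eq_exp[OF assms _ refl], auto)
qed

end
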